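(* Let $\theta\in(\pi,2\pi)$. Then for all $x,y\in S_\theta$, $s_{S_\theta}(x,y)\le 2\sin(\theta/4)\, j^*_{S_\theta}(x,y)$, and the constant $2\sin(\theta/4)$ is sharp.
   Context: $S_\theta=\{x\in\mathbb{C}:0<\arg(x)<\theta\}$. For a domain $G\subsetneq\mathbb{C}$, $d_G(x)=\inf\{|x-z|:z\in\partial G\}$, $s_G(x,y)=\frac{|x-y|}{\inf_{z\in\partial G}(|x-z|+|z-y|)}$, and $j^*_G(x,y)=\frac{|x-y|}{|x-y|+2\min\{d_G(x),d_G(y)\}}$. *)

theory Defs
  imports "HOL-Analysis.Analysis"
begin

definition arg0 :: "complex \<Rightarrow> real" where
  "arg0 z = (if 0 \<le> Arg z then Arg z else Arg z + 2 * pi)"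

text \<open>The open sector S_theta = {x. 0 < arg x < theta}; the origin has no argument
  and is excluded.\<close>
definition sector :: "real \<Rightarrow> complex set" where
  "sector \<theta> = {x. x \<noteq> 0 \<and> 0 < arg0 x \<and> arg0 x < \<theta>}"

definition bdist :: "complex set \<Rightarrow> complex \<Rightarrow> real" where
  "bdist G x = Inf ((\<lambda>z. cmod (x - z)) ` frontier G)"

definition s_metric :: "complex set \<Rightarrow> complex \<Rightarrow> complex \<Rightarrow> real" where
  "s_metric G x y = cmod (x - y) / Inf ((\<lambda>z. cmod (x - z) + cmod (z - y)) ` frontier G)"

definition jstar_metric :: "complex set \<Rightarrow> complex \<Rightarrow> complex \<Rightarrow> real" where
  "jstar_metric G x y = cmod (x - y) / (cmod (x - y) + 2 * min (bdist G x) (bdist G y))"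

end

theory Submission
  imports Defs
begin

text \<open>
  Write \<open>k = 2 sin(\<theta>/4)\<close> and call \<open>m = min (d(x)) (d(y))\<close> the margin of \<open>x, y\<close>.
  Since the infimum in \<open>s(x,y)\<close> runs over the boundary and
  \<open>j*(x,y) = |x - y| / (|x - y| + 2m)\<close>, the inequality \<open>s \<le> k j*\<close> amounts to
  \<open>|x - y| + 2m \<le> k (|x - z| + |z - y|)\<close> for every boundary point \<open>z\<close>.
  The boundary consists of the two rays \<open>[0,\<infinity>)\<close> and \<open>e^(i\<theta>) [0,\<infinity>)\<close>, which are
  exchanged by the reflection \<open>z \<mapsto> e^(i\<theta>) cnj z\<close>; this isometry preserves distances to the
  boundary, so \<open>z = t \<ge> 0\<close> may be assumed. For \<open>x = r e^(i\<phi>)\<close> and \<open>y = \<rho> e^(i\<psi>)\<close> there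
  are three cases. If \<open>cos \<phi> + cos \<psi> \<le> 0\<close>, then \<open>|x - t| + |t - y| \<ge> r + \<rho>\<close>, and
  \<open>|x - y| + 2m \<le> k (r + \<rho>)\<close> follows by bounding \<open>m\<close> with the distances of \<open>x\<close> and \<open>y\<close> to
  the two rays. If \<open>x\<close> and \<open>y\<close> lie on the same side of the real axis, then
  \<open>|x - t| + |t - y| \<ge> |x - cnj y|\<close> and \<open>|x - y| + 2m \<le> k |x - cnj y|\<close>. Otherwise already
  \<open>2m \<le> (k - 1) |x - y|\<close>.

  For sharpness, \<open>x = e^(i\<theta>/4)\<close> and \<open>y = e^(3i\<theta>/4)\<close> satisfy \<open>|x - y| = k\<close> and
  \<open>d(x) = d(y) \<ge> k/2\<close>, so that \<open>s(x,y) \<ge> k/2\<close> while \<open>j*(x,y) \<le> 1/2\<close>.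
\<close>

section \<open>Polar coordinates and the boundary of the sector\<close>

lemma arg0_bounds: "0 \<le> arg0 z" "arg0 z < 2 * pi"
  using Arg_bounded[of z] by (auto simp: arg0_def)

lemma rcis_cmod_arg0: "rcis (cmod z) (arg0 z) = z"
  using rcis_cmod_Arg[of z] by (auto simp: arg0_def rcis_def cis.ctr)

lemma arg0_rcis:
  assumes "0 < r" "0 \<le> \<phi>" "\<phi> < 2 * pi"
  shows "arg0 (rcis r \<phi>) = \<phi>"
proof (cases "\<phi> \<le> pi")
  case True
  then show ?thesis using assms by (simp add: arg0_def Arg_rcis)
next
  case False
  have "rcis r \<phi> = rcis r (\<phi> - 2 * pi)"
    using cis_mult[of "\<phi> - 2 * pi" "2 * pi"] by (simp add: rcis_def)
  moreover have "Arg (rcis r (\<phi> - 2 * pi)) = \<phi> - 2 * pi"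
    using False assms by (intro Arg_rcis) auto
  ultimately show ?thesis using False assms by (simp add: arg0_def)
qed

lemma mem_sector_iff_rcis:
  assumes "\<theta> \<le> 2 * pi"
  shows "z \<in> sector \<theta> \<longleftrightarrow> (\<exists>r \<phi>. 0 < r \<and> 0 < \<phi> \<and> \<phi> < \<theta> \<and> z = rcis r \<phi>)"
proof
  assume "z \<in> sector \<theta>"
  then show "\<exists>r \<phi>. 0 < r \<and> 0 < \<phi> \<and> \<phi> < \<theta> \<and> z = rcis r \<phi>"
    using rcis_cmod_arg0[of z]
    by (intro exI[of _ "cmod z"] exI[of _ "arg0 z"]) (auto simp: sector_def)
next
  assume "\<exists>r \<phi>. 0 < r \<and> 0 < \<phi> \<and> \<phi> < \<theta> \<and> z = rcis r \<phi>"
  then show "z \<in> sector \<theta>"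
    using assms by (auto simp: sector_def arg0_rcis)
qed

definition sector_reflect :: "real \<Rightarrow> complex \<Rightarrow> complex" where
  "sector_reflect \<theta> z = cis \<theta> * cnj z"

lemma sector_reflect_rcis [simp]: "sector_reflect \<theta> (rcis r a) = rcis r (\<theta> - a)"
  by (simp add: sector_reflect_def rcis_def cis_cnj cis_mult mult.left_commute)

lemma sector_reflect_of_real [simp]: "sector_reflect \<theta> (of_real t) = rcis t \<theta>"
  by (simp add: sector_reflect_def rcis_def mult.commute)

lemma sector_reflect_sector_reflect [simp]: "sector_reflect \<theta> (sector_reflect \<theta> z) = z"
  by (simp add: sector_reflect_def cis_cnj mult.assoc[symmetric] cis_mult)

lemma norm_sector_reflect_diff:
  "cmod (sector_reflect \<theta> a - sector_reflect \<theta> b) = cmod (a - b)"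
  by (simp add: sector_reflect_def norm_mult flip: right_diff_distrib complex_cnj_diff)

lemma Im_sector_reflect: "Im (sector_reflect \<theta> z) = sin \<theta> * Re z - cos \<theta> * Im z"
  by (simp add: sector_reflect_def cis.ctr)

lemma sin_gt_zero_iff:
  assumes "- pi < a" "a < 2 * pi"
  shows "0 < sin a \<longleftrightarrow> 0 < a \<and> a < pi"
proof
  assume pos: "0 < sin a"
  have "sin a \<le> 0" if "a \<le> 0" using sin_ge_zero[of "- a"] that assms by auto
  moreover have "sin a \<le> 0" if "pi \<le> a" using sin_le_zero that assms by auto
  ultimately show "0 < a \<and> a < pi" using pos by force
qed (auto intro: sin_gt_zero)

lemma sector_eq_halfplanes:
  assumes "pi < \<theta>" "\<theta> < 2 * pi"
  shows "sector \<theta> = {z. 0 < Im z} \<union> {z. 0 < Im (sector_reflect \<theta> z)}"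
proof (intro set_eqI)
  fix z :: complex
  show "z \<in> sector \<theta> \<longleftrightarrow> z \<in> {z. 0 < Im z} \<union> {z. 0 < Im (sector_reflect \<theta> z)}"
  proof (cases "z = 0")
    case False
    define r \<phi> where "r = cmod z" and "\<phi> = arg0 z"
    have r: "0 < r" and z: "z = rcis r \<phi>"
      using False rcis_cmod_arg0[of z] by (auto simp: r_def \<phi>_def)
    have \<phi>: "0 \<le> \<phi>" "\<phi> < 2 * pi" using arg0_bounds by (auto simp: \<phi>_def)
    have "0 < Im z \<longleftrightarrow> 0 < \<phi> \<and> \<phi> < pi"
      using r \<phi> sin_gt_zero_iff[of \<phi>] by (simp add: z zero_less_mult_iff)
    moreover have "0 < Im (sector_reflect \<theta> z) \<longleftrightarrow> \<theta> - pi < \<phi> \<and> \<phi> < \<theta>"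
      using r \<phi> assms sin_gt_zero_iff[of "\<theta> - \<phi>"] by (auto simp: z zero_less_mult_iff)
    ultimately show ?thesis
      using False assms by (auto simp: sector_def \<phi>_def)
  qed (simp add: sector_def sector_reflect_def)
qed

lemma open_sector:
  assumes "pi < \<theta>" "\<theta> < 2 * pi"
  shows "open (sector \<theta>)"
  unfolding sector_eq_halfplanes[OF assms] Im_sector_reflect
  by (intro open_Un open_Collect_less continuous_intros)

definition sector_rays :: "real \<Rightarrow> complex set" where
  "sector_rays \<theta> = {of_real t | t. 0 \<le> t} \<union> {rcis t \<theta> | t. 0 \<le> t}"

lemma of_real_in_sector_rays [intro]: "0 \<le> t \<Longrightarrow> of_real t \<in> sector_rays \<theta>"
  and rcis_in_sector_rays [intro]: "0 \<le> t \<Longrightarrow> rcis t \<theta> \<in> sector_rays \<theta>"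
  by (auto simp: sector_rays_def)

lemma zero_in_sector_rays [simp]: "0 \<in> sector_rays \<theta>"
  using of_real_in_sector_rays[of 0] by simp

lemma frontier_sector:
  assumes "pi < \<theta>" "\<theta> < 2 * pi"
  shows "frontier (sector \<theta>) = sector_rays \<theta>"
proof -
  let ?a = "Complex (sin \<theta>) (- cos \<theta>)"
  have sin: "sin \<theta> < 0" using assms by (rule sin_lt_zero)
  have a: "?a \<noteq> 0" using sin by (auto simp: complex_eq_iff)
  have sector: "sector \<theta> = {z. 0 < \<i> \<bullet> z} \<union> {z. 0 < ?a \<bullet> z}"
    by (simp add: sector_eq_halfplanes[OF assms] inner_complex_def Im_sector_reflect)
  have closure: "closure (sector \<theta>) = {z. 0 \<le> \<i> \<bullet> z} \<union> {z. 0 \<le> ?a \<bullet> z}"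
    unfolding sector using a closure_halfspace_gt[of \<i> 0] by simp
  have real_ray: "Im z = 0 \<and> Im (sector_reflect \<theta> z) \<le> 0 \<longleftrightarrow> (\<exists>t\<ge>0. z = of_real t)" for z
  proof
    assume z: "Im z = 0 \<and> Im (sector_reflect \<theta> z) \<le> 0"
    then have "0 \<le> Re z" using sin by (auto simp: Im_sector_reflect mult_le_0_iff)
    moreover have "z = of_real (Re z)" using z by (simp add: complex_eq_iff)
    ultimately show "\<exists>t\<ge>0. z = of_real t" by blast
  qed (use sin in \<open>auto simp: Im_sector_reflect mult_nonpos_nonneg\<close>)
  have other_ray: "Im (sector_reflect \<theta> z) = 0 \<and> Im z \<le> 0 \<longleftrightarrow> (\<exists>t\<ge>0. z = rcis t \<theta>)" for z
    using real_ray[of "sector_reflect \<theta> z"]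
    by (metis sector_reflect_of_real sector_reflect_sector_reflect)
  have "frontier (sector \<theta>) = closure (sector \<theta>) - sector \<theta>"
    using open_sector[OF assms] by (simp add: frontier_def interior_open)
  also have "\<dots> = {z. Im z = 0 \<and> Im (sector_reflect \<theta> z) \<le> 0} \<union>
                   {z. Im (sector_reflect \<theta> z) = 0 \<and> Im z \<le> 0}"
    by (subst closure) (auto simp: sector inner_complex_def Im_sector_reflect)
  also have "\<dots> = sector_rays \<theta>"
    unfolding real_ray other_ray sector_rays_def by blast
  finally show ?thesis .
qed

lemma sector_reflect_sector_rays: "sector_reflect \<theta> ` sector_rays \<theta> = sector_rays \<theta>"
proof -
  have into: "sector_reflect \<theta> w \<in> sector_rays \<theta>" if "w \<in> sector_rays \<theta>" for w
    using that by (auto simp: sector_rays_def)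
  show ?thesis
  proof
    show "sector_reflect \<theta> ` sector_rays \<theta> \<subseteq> sector_rays \<theta>" using into by blast
    show "sector_rays \<theta> \<subseteq> sector_reflect \<theta> ` sector_rays \<theta>"
      using into by (metis image_eqI sector_reflect_sector_reflect subsetI)
  qed
qed

section \<open>Distance to the boundary rays\<close>

lemma le_infdist:
  assumes "A \<noteq> {}" "\<And>a. a \<in> A \<Longrightarrow> d \<le> dist x a"
  shows "d \<le> infdist x A"
  using assms by (simp add: infdist_notempty) (rule cInf_greatest; auto)

lemma infdist_sector_reflect:
  "infdist (sector_reflect \<theta> z) (sector_rays \<theta>) = infdist z (sector_rays \<theta>)"
proof -
  have ne: "sector_rays \<theta> \<noteq> {}" by auto
  have "infdist (sector_reflect \<theta> z) (sector_rays \<theta>) =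
        infdist (sector_reflect \<theta> z) (sector_reflect \<theta> ` sector_rays \<theta>)"
    by (simp only: sector_reflect_sector_rays)
  also have "\<dots> = infdist z (sector_rays \<theta>)"
    using ne by (simp add: infdist_notempty image_image dist_norm norm_sector_reflect_diff)
  finally show ?thesis .
qed

lemma infdist_sector_rays_le:
  "infdist y (sector_rays \<theta>) \<le> \<bar>Im y\<bar> + max 0 (- Re y) * cmod (1 + cis \<theta>)"
proof (cases "0 \<le> Re y")
  case True
  have "dist y (of_real (Re y)) = \<bar>Im y\<bar>" by (simp add: dist_norm cmod_def)
  then show ?thesis using True by (intro infdist_le2[of "of_real (Re y)"]) auto
next
  case False
  define u where "u = - Re y"
  have "y - rcis u \<theta> = (y + of_real u) - of_real u * (1 + cis \<theta>)"
    by (simp add: rcis_def algebra_simps)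
  then have "dist y (rcis u \<theta>) \<le> cmod (y + of_real u) + cmod (of_real u * (1 + cis \<theta>))"
    by (metis dist_norm norm_triangle_ineq4)
  also have "\<dots> = \<bar>Im y\<bar> + u * cmod (1 + cis \<theta>)"
    using False by (simp add: u_def norm_mult) (simp add: cmod_def)
  finally show ?thesis using False by (intro infdist_le2[of "rcis u \<theta>"]) (auto simp: u_def)
qed

lemma infdist_rcis_sector_rays_le:
  assumes "0 \<le> r" "0 \<le> \<phi>"
  shows "infdist (rcis r \<phi>) (sector_rays \<theta>) \<le> r * sin (min \<phi> (pi / 2))"
proof (cases "\<phi> \<le> pi / 2")
  case True
  then have "0 \<le> cos \<phi>" "0 \<le> sin \<phi>" using assms by (auto intro: cos_ge_zero sin_ge_zero)
  then show ?thesis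
    using True assms infdist_sector_rays_le[of "rcis r \<phi>" \<theta>] by simp
next
  case False
  then show ?thesis using assms infdist_le[of 0 "sector_rays \<theta>" "rcis r \<phi>"] by simp
qed

lemma infdist_rcis_sector_rays_le_reflect:
  assumes "0 \<le> r" "\<phi> \<le> \<theta>"
  shows "infdist (rcis r \<phi>) (sector_rays \<theta>) \<le> r * sin (min (\<theta> - \<phi>) (pi / 2))"
  using assms infdist_rcis_sector_rays_le[of r "\<theta> - \<phi>" \<theta>]
    infdist_sector_reflect[of \<theta> "rcis r (\<theta> - \<phi>)"] by simp

lemma norm_rcis_diff_sq:
  "(cmod (rcis r a - rcis \<rho> b))\<^sup>2 = r\<^sup>2 + \<rho>\<^sup>2 - 2 * r * \<rho> * cos (a - b)"
proof -
  have "(cmod (rcis r a - rcis \<rho> b))\<^sup>2 =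
        r\<^sup>2 * ((cos a)\<^sup>2 + (sin a)\<^sup>2) + \<rho>\<^sup>2 * ((cos b)\<^sup>2 + (sin b)\<^sup>2)
        - 2 * r * \<rho> * (cos a * cos b + sin a * sin b)"
    unfolding cmod_power2 by (simp only: minus_complex.sel Re_rcis Im_rcis) algebra
  then show ?thesis by (simp add: cos_diff)
qed

lemma norm_rcis_minus_of_real_ge: "r - t * cos \<phi> \<le> cmod (rcis r \<phi> - of_real t)"
proof -
  have "(rcis r \<phi> - of_real t) * cis (- \<phi>) = of_real r - of_real t * cis (- \<phi>)"
    by (simp add: rcis_def algebra_simps cis_mult)
  then have "r - t * cos \<phi> = Re ((rcis r \<phi> - of_real t) * cis (- \<phi>))" by simp
  also have "\<dots> \<le> cmod ((rcis r \<phi> - of_real t) * cis (- \<phi>))" by (rule complex_Re_le_cmod)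
  finally show ?thesis by (simp add: norm_mult)
qed

lemma radii_sum_le_dist_sum:
  assumes "0 \<le> t" "cos \<phi> + cos \<psi> \<le> 0"
  shows "r + \<rho> \<le> cmod (rcis r \<phi> - of_real t) + cmod (of_real t - rcis \<rho> \<psi>)"
proof -
  have "r - t * cos \<phi> \<le> cmod (rcis r \<phi> - of_real t)" by (rule norm_rcis_minus_of_real_ge)
  moreover have "\<rho> - t * cos \<psi> \<le> cmod (of_real t - rcis \<rho> \<psi>)"
    using norm_rcis_minus_of_real_ge[of \<rho> t \<psi>] by (simp add: norm_minus_commute)
  moreover have "t * (cos \<phi> + cos \<psi>) \<le> 0" using assms by (simp add: mult_nonneg_nonpos)
  ultimately show ?thesis by (simp add: algebra_simps)
qed

lemma norm_diff_cnj_le_dist_sum: "cmod (x - cnj y) \<le> cmod (x - of_real t) + cmod (of_real t - y)"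
proof -
  have "cmod (of_real t - y) = cmod (of_real t - cnj y)"
    by (metis complex_cnj_complex_of_real complex_cnj_diff complex_mod_cnj)
  then show ?thesis using norm_triangle_ineq[of "x - of_real t" "of_real t - cnj y"] by simp
qed

lemma norm_one_plus_cis:
  fixes a :: real
  shows "cmod (1 + cis a) = 2 * \<bar>cos (a / 2)\<bar>"
proof -
  have "1 + cis a = cis (a / 2) * of_real (2 * cos (a / 2))"
    using cos_double_cos[of "a / 2"] sin_double[of "a / 2"]
    by (simp add: complex_eq_iff power2_eq_square)
  then show ?thesis by (simp add: norm_mult)
qed

lemma sin_add_sin_le:
  fixes a b :: real
  assumes "0 \<le> sin ((a + b) / 2)"
  shows "sin a + sin b \<le> 2 * sin ((a + b) / 2)"
  using assms by (simp add: sin_plus_sin mult_left_le)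

lemma sin_le_sin_min_pi_half:
  fixes a :: real
  shows "sin a \<le> sin (min a (pi / 2))"
  by (simp add: min_def)

lemma sin_min_pi_half_midpoint:
  fixes a b :: real
  assumes "0 \<le> a" "0 \<le> b"
  shows "sin (min a (pi / 2)) + sin (min b (pi / 2)) \<le> 2 * sin (min ((a + b) / 2) (pi / 2))"
proof -
  let ?a = "min a (pi / 2)" and ?b = "min b (pi / 2)"
  have "0 \<le> sin ((?a + ?b) / 2)" using assms pi_gt_zero by (intro sin_ge_zero) (auto simp: min_def)
  then have "sin ?a + sin ?b \<le> 2 * sin ((?a + ?b) / 2)" by (rule sin_add_sin_le)
  also have "\<dots> \<le> 2 * sin (min ((a + b) / 2) (pi / 2))"
    using assms pi_gt_zero by (intro mult_left_mono sin_monotone_2pi_le) (auto simp: min_def)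
  finally show ?thesis .
qed

lemma two_sin_half_sq:
  fixes a :: real
  shows "(2 * sin (a / 2))\<^sup>2 = 2 - 2 * cos a"
  using cos_double_sin[of "a / 2"] by (simp add: power_mult_distrib)

lemma one_minus_cos_le_two_sin_half:
  fixes a :: real
  assumes "0 \<le> sin (a / 2)"
  shows "1 - cos a \<le> 2 * sin (a / 2)"
proof -
  have "1 - cos a = 2 * sin (a / 2) * sin (a / 2)"
    using cos_double_sin[of "a / 2"] by (simp add: power2_eq_square)
  also have "\<dots> \<le> 2 * sin (a / 2)" using assms by (simp add: mult_left_le)
  finally show ?thesis .
qed

lemma sin_quarter_pos: "0 < \<theta> \<Longrightarrow> \<theta> < 4 * pi \<Longrightarrow> 0 < sin (\<theta> / 4)"
  by (intro sin_gt_zero) auto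

lemma cos_half_neg: "pi < \<theta> \<Longrightarrow> \<theta> \<le> 2 * pi \<Longrightarrow> cos (\<theta> / 2) < 0"
  using cos_mono_less_eq[of "\<theta> / 2" "pi / 2"] by simp

lemma two_sin_quarter_sq:
  assumes "pi < \<theta>" "\<theta> < 2 * pi"
  shows "(2 * sin (\<theta> / 4))\<^sup>2 = 2 + cmod (1 + cis \<theta>)"
  using two_sin_half_sq[of "\<theta> / 2"] norm_one_plus_cis[of \<theta>] cos_half_neg[of \<theta>] assms by simp

lemma two_sin_quarter_gt_one:
  assumes "pi < \<theta>" "\<theta> < 2 * pi"
  shows "1 < 2 * sin (\<theta> / 4)"
  using one_minus_cos_le_two_sin_half[of "\<theta> / 2"] sin_quarter_pos[of \<theta>] cos_half_neg[of \<theta>] assms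
  by simp

lemma sin_add_half_sub_pi_le:
  assumes "pi < \<theta>" "\<theta> < 2 * pi" "0 \<le> g" "g \<le> pi / 2"
  shows "sin (g + \<theta> / 2 - pi) \<le> (2 * sin (\<theta> / 4) - 1) * sin g"
proof -
  have "sin (g + \<theta> / 2 - pi) = - cos (\<theta> / 2) * sin g - cos g * sin (\<theta> / 2)"
    by (simp add: sin_diff sin_add)
  also have "\<dots> \<le> - cos (\<theta> / 2) * sin g"
    using assms by (simp add: cos_ge_zero sin_ge_zero)
  also have "\<dots> \<le> (2 * sin (\<theta> / 4) - 1) * sin g"
    using one_minus_cos_le_two_sin_half[of "\<theta> / 2"] sin_quarter_pos[of \<theta>] assms
    by (intro mult_right_mono sin_ge_zero) auto
  finally show ?thesis .
qed

lemma margin_le_of_ray_bounds: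
  fixes r \<rho> m a b :: real
  assumes "0 < r" "0 < \<rho>" "0 \<le> a" "0 \<le> b"
    and "m \<le> r * sin (min a (pi / 2))" "m \<le> \<rho> * sin (min b (pi / 2))"
  shows "m * (r + \<rho>) \<le> 2 * r * \<rho> * sin (min ((a + b) / 2) (pi / 2))"
proof -
  have "m * \<rho> \<le> r * sin (min a (pi / 2)) * \<rho>" using assms by (intro mult_right_mono) auto
  moreover have "m * r \<le> \<rho> * sin (min b (pi / 2)) * r" using assms by (intro mult_right_mono) auto
  moreover have "r * \<rho> * (sin (min a (pi / 2)) + sin (min b (pi / 2))) \<le>
                 r * \<rho> * (2 * sin (min ((a + b) / 2) (pi / 2)))"
    using assms sin_min_pi_half_midpoint[of a b] by (intro mult_left_mono) auto
  ultimately show ?thesis by (simp add: algebra_simps)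
qed

lemma exists_tangent_parameter:
  fixes S T k :: real
  assumes "0 \<le> S" "S \<le> 1" "T \<le> 1" "S + T \<le> k" "2 \<le> k\<^sup>2" "0 \<le> k"
  obtains l where "0 < l" "1 + l\<^sup>2 \<le> 2 * k * l" "S\<^sup>2 + l\<^sup>2 + 2 * l * T \<le> 2 * k * l"
proof -
  have k: "1 < k"
  proof (rule ccontr)
    assume "\<not> 1 < k"
    then have "k * k \<le> 1 * 1" using assms(6) by (intro mult_mono) auto
    then show False using assms(5) by (simp add: power2_eq_square)
  qed
  show ?thesis
  proof (cases "k - 1 \<le> S")
    case True
    have "0 \<le> (S - (k - 1)) * (1 - S)" using True assms by simp
    moreover have "k * (k - 1) \<le> k * S" using True assms by (intro mult_left_mono) auto
    ultimately have "1 + S\<^sup>2 \<le> 2 * k * S"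
      using assms(5) by (simp add: power2_eq_square algebra_simps)
    moreover have "S * (S + T) \<le> S * k" using assms by (intro mult_left_mono) auto
    then have "S\<^sup>2 + S\<^sup>2 + 2 * S * T \<le> 2 * k * S" by (simp add: power2_eq_square algebra_simps)
    moreover have "0 < S" using True k by linarith
    ultimately show ?thesis using that by blast
  next
    case False
    let ?l = "k - 1"
    have "1 + ?l\<^sup>2 \<le> 2 * k * ?l" using assms(5) by (simp add: power2_eq_square algebra_simps)
    moreover have "S * S \<le> ?l * ?l" using False assms by (intro mult_mono) auto
    moreover have "?l * T \<le> ?l * 1" using k assms by (intro mult_left_mono) auto
    ultimately have "S\<^sup>2 + ?l\<^sup>2 + 2 * ?l * T \<le> 2 * k * ?l"
      by (simp add: power2_eq_square algebra_simps)
    then show ?thesis using k \<open>1 + ?l\<^sup>2 \<le> 2 * k * ?l\<close> by (intro that[of ?l]) auto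
  qed
qed

lemma add_mult_le_of_endpoints:
  fixes a b c p q :: real
  assumes "0 \<le> p" "p \<le> q" "a \<le> c" "a + q * b \<le> c"
  shows "a + p * b \<le> c"
  using assms mult_right_mono[of p q b] mult_nonneg_nonpos[of p b] by (cases "0 \<le> b") auto

lemma chord_add_margin_le:
  fixes r \<rho> X m S C T k :: real
  assumes rho: "0 < r" "0 < \<rho>" and X: "0 \<le> X" "X\<^sup>2 = (r + \<rho>)\<^sup>2 - 4 * r * \<rho> * C\<^sup>2"
    and SC: "S\<^sup>2 + C\<^sup>2 = 1" "0 \<le> S" and T: "T \<le> 1" and k: "S + T \<le> k" "2 \<le> k\<^sup>2" "0 \<le> k"
    and m: "m * (r + \<rho>) \<le> 2 * r * \<rho> * T"
  shows "X + 2 * m \<le> k * (r + \<rho>)"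
proof -
  have S2: "S\<^sup>2 = 1 - C\<^sup>2" using SC(1) by simp
  then have "S \<le> 1" using power2_le_imp_le[of S 1] by simp
  then obtain l where l: "0 < l" "1 + l\<^sup>2 \<le> 2 * k * l" "S\<^sup>2 + l\<^sup>2 + 2 * l * T \<le> 2 * k * l"
    using exists_tangent_parameter SC(2) T k by blast
  define n P where "n = r + \<rho>" and "P = r * \<rho>"
  have n: "0 < n" and P: "0 \<le> 4 * P" using rho by (simp_all add: n_def P_def)
  have "0 \<le> (r - \<rho>)\<^sup>2" by simp
  then have P_le: "4 * P \<le> n\<^sup>2" by (simp add: n_def P_def power2_eq_square algebra_simps)
  \<comment> \<open>The tangent bound for the square root at \<open>l\<^sup>2 n\<^sup>2\<close> leaves a bound affine in \<open>4 P \<in> [0, n\<^sup>2]\<close>;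
    \<open>l\<close> was chosen so that it holds at both endpoints.\<close>
  have "0 \<le> (X - l * n)\<^sup>2" by simp
  then have tangent: "2 * l * n * X \<le> X\<^sup>2 + l\<^sup>2 * n\<^sup>2" by (simp add: power2_eq_square algebra_simps)
  have "l * (m * n) \<le> l * (2 * P * T)" using m l by (intro mult_left_mono) (auto simp: n_def P_def)
  then have margin: "2 * l * n * (2 * m) \<le> 8 * l * P * T" by (simp add: algebra_simps)
  have left_end: "n\<^sup>2 * (1 + l\<^sup>2) \<le> n\<^sup>2 * (2 * k * l)" using l(2) by (intro mult_left_mono) auto
  have "n\<^sup>2 * (1 + l\<^sup>2) + n\<^sup>2 * (2 * l * T - C\<^sup>2) = n\<^sup>2 * (S\<^sup>2 + l\<^sup>2 + 2 * l * T)"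
    unfolding S2 by (simp add: algebra_simps)
  also have "\<dots> \<le> n\<^sup>2 * (2 * k * l)" using l(3) by (intro mult_left_mono) auto
  finally have right_end: "n\<^sup>2 * (1 + l\<^sup>2) + n\<^sup>2 * (2 * l * T - C\<^sup>2) \<le> n\<^sup>2 * (2 * k * l)" .
  have "X\<^sup>2 + l\<^sup>2 * n\<^sup>2 + 8 * l * P * T = n\<^sup>2 * (1 + l\<^sup>2) + 4 * P * (2 * l * T - C\<^sup>2)"
    using X(2) by (simp add: n_def P_def algebra_simps)
  also have "\<dots> \<le> n\<^sup>2 * (2 * k * l)" by (rule add_mult_le_of_endpoints[OF P P_le left_end right_end])
  finally have "2 * l * n * (X + 2 * m) \<le> 2 * l * n * (k * n)"
    using tangent margin by (simp add: power2_eq_square algebra_simps)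
  then show ?thesis using l n by (simp add: n_def)
qed

lemma twice_margin_le:
  fixes r \<rho> X m S T K :: real
  assumes rho: "0 < r" "0 < \<rho>" and X: "0 \<le> X" "4 * r * \<rho> * S\<^sup>2 \<le> X\<^sup>2" and "0 \<le> S" "0 \<le> m"
    and m: "m * (r + \<rho>) \<le> 2 * r * \<rho> * T" and T: "T \<le> K * S" and "0 \<le> K"
  shows "2 * m \<le> K * X"
proof -
  have "2 * r * \<rho> * T \<le> 2 * r * \<rho> * (K * S)" using T rho by (intro mult_left_mono) auto
  then have "2 * m * (r + \<rho>) \<le> 4 * r * \<rho> * (K * S)" using m by linarith
  moreover have "0 \<le> 2 * m * (r + \<rho>)" using assms by simp
  ultimately have "(2 * m * (r + \<rho>))\<^sup>2 \<le> (4 * r * \<rho> * (K * S))\<^sup>2" by (rule power_mono)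
  also have "\<dots> = (4 * r * \<rho>) * (K\<^sup>2 * (4 * r * \<rho> * S\<^sup>2))" by (simp add: power2_eq_square)
  also have "\<dots> \<le> (r + \<rho>)\<^sup>2 * (K\<^sup>2 * X\<^sup>2)"
  proof (rule mult_mono)
    have "0 \<le> (r - \<rho>)\<^sup>2" by simp
    then show "4 * r * \<rho> \<le> (r + \<rho>)\<^sup>2" by (simp add: power2_eq_square algebra_simps)
    show "K\<^sup>2 * (4 * r * \<rho> * S\<^sup>2) \<le> K\<^sup>2 * X\<^sup>2" using X by (intro mult_left_mono) auto
  qed (use rho in auto)
  finally have "(2 * m)\<^sup>2 * (r + \<rho>)\<^sup>2 \<le> (K * X)\<^sup>2 * (r + \<rho>)\<^sup>2"
    by (simp add: power_mult_distrib mult.commute)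
  then have "(2 * m)\<^sup>2 \<le> (K * X)\<^sup>2" using rho by simp
  then show ?thesis by (rule power2_le_imp_le) (use assms in auto)
qed

lemma eight_mult_le_sum_sq:
  fixes u a h1 h2 :: real
  assumes "0 \<le> u" "0 \<le> a" "0 \<le> h1" "0 \<le> h2" "u * h1 \<le> a * h2"
  shows "8 * u * h1 \<le> (a + u)\<^sup>2 + (h1 + h2)\<^sup>2"
proof -
  have "0 \<le> (u * h2 - a * h1)\<^sup>2" by simp
  moreover have "(u * h1) * (u * h1) \<le> (u * h1) * (a * h2)"
    using assms by (intro mult_left_mono) auto
  ultimately have "(2 * (u * h1))\<^sup>2 \<le> (u * h2 + a * h1)\<^sup>2"
    by (simp add: power2_eq_square algebra_simps)
  then have "2 * (u * h1) \<le> u * h2 + a * h1" by (rule power2_le_imp_le) (use assms in simp)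
  moreover have "0 \<le> (a + u - (h1 + h2))\<^sup>2" by simp
  ultimately show ?thesis using assms(5) by (simp add: power2_eq_square algebra_simps)
qed

lemma norm_diff_add_margin_le_conj:
  fixes x y :: complex and m c k :: real
  assumes "0 \<le> Im x * Im y" "0 \<le> Re x" "0 \<le> m" "m \<le> \<bar>Im x\<bar>"
    and "m \<le> \<bar>Im y\<bar> + max 0 (- Re y) * c" "max 0 (- Re y) * \<bar>Im x\<bar> \<le> Re x * \<bar>Im y\<bar>"
    and "0 \<le> c" "0 \<le> k" "k\<^sup>2 = 2 + c"
  shows "cmod (x - y) + 2 * m \<le> k * cmod (x - cnj y)"
proof -
  define u A B h1 h2 where "u = max 0 (- Re y)" and "A = cmod (x - y)" and "B = cmod (x - cnj y)"
    and "h1 = \<bar>Im x\<bar>" and "h2 = \<bar>Im y\<bar>"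
  have h: "Im x * Im y = h1 * h2" using assms(1) by (simp add: h1_def h2_def abs_mult[symmetric])
  have B2: "B\<^sup>2 = (Re x - Re y)\<^sup>2 + (Im x + Im y)\<^sup>2" by (simp add: B_def cmod_power2)
  have A2: "A\<^sup>2 = (Re x - Re y)\<^sup>2 + (Im x - Im y)\<^sup>2" by (simp add: A_def cmod_power2)
  have AB: "A\<^sup>2 = B\<^sup>2 - 4 * h1 * h2"
    using A2 B2 h by (simp add: power2_eq_square algebra_simps)
  have mm: "m * m \<le> h1 * (h2 + u * c)"
    using assms by (intro mult_mono) (auto simp: h1_def h2_def u_def)
  have u8: "8 * u * h1 \<le> B\<^sup>2"
  proof (cases "u = 0")
    case False
    then have "Re y = - u" by (auto simp: u_def)
    moreover have "(Im x + Im y)\<^sup>2 = (h1 + h2)\<^sup>2"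
      using h by (simp add: power2_eq_square algebra_simps h1_def h2_def abs_mult_self_eq)
    moreover have "8 * u * h1 \<le> (Re x + u)\<^sup>2 + (h1 + h2)\<^sup>2"
      using assms by (intro eight_mult_le_sum_sq) (auto simp: u_def h1_def h2_def)
    ultimately show ?thesis by (simp add: B2)
  qed simp
  have "0 \<le> (A - 2 * m)\<^sup>2" by simp
  then have "(A + 2 * m)\<^sup>2 \<le> 2 * A\<^sup>2 + 8 * (m * m)" by (simp add: power2_eq_square algebra_simps)
  also have "\<dots> \<le> 2 * B\<^sup>2 + c * (8 * u * h1)" using AB mm by (simp add: algebra_simps)
  also have "\<dots> \<le> 2 * B\<^sup>2 + c * B\<^sup>2" using u8 assms by (simp add: mult_left_mono)
  also have "\<dots> = (k * B)\<^sup>2" using assms by (simp add: power_mult_distrib algebra_simps)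
  finally have "(A + 2 * m)\<^sup>2 \<le> (k * B)\<^sup>2" .
  then show ?thesis
    unfolding A_def B_def by (rule power2_le_imp_le) (use assms in simp)
qed

lemma sector_margin_le_norm_add_ordered:
  assumes \<theta>: "pi < \<theta>" "\<theta> < 2 * pi" and "0 < r" "0 < \<rho>" "0 < \<phi>" "\<phi> \<le> \<psi>" "\<psi> < \<theta>"
    and "m \<le> infdist (rcis r \<phi>) (sector_rays \<theta>)" "m \<le> infdist (rcis \<rho> \<psi>) (sector_rays \<theta>)"
  shows "cmod (rcis r \<phi> - rcis \<rho> \<psi>) + 2 * m \<le> 2 * sin (\<theta> / 4) * (r + \<rho>)"
proof -
  define \<gamma> where "\<gamma> = \<psi> - \<phi>"
  have "m * (r + \<rho>) \<le> 2 * r * \<rho> * sin (min ((\<phi> + (\<theta> - \<psi>)) / 2) (pi / 2))"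
    using assms infdist_rcis_sector_rays_le[of r \<phi> \<theta>] infdist_rcis_sector_rays_le_reflect[of \<rho> \<psi> \<theta>]
    by (intro margin_le_of_ray_bounds) auto
  also have "(\<phi> + (\<theta> - \<psi>)) / 2 = (\<theta> - \<gamma>) / 2" by (simp add: \<gamma>_def)
  finally have margin: "m * (r + \<rho>) \<le> 2 * r * \<rho> * sin (min ((\<theta> - \<gamma>) / 2) (pi / 2))" .
  have "cos (\<phi> - \<psi>) = cos \<gamma>" unfolding \<gamma>_def by (metis cos_minus minus_diff_eq)
  also have "\<dots> = 2 * (cos (\<gamma> / 2))\<^sup>2 - 1" using cos_double_cos[of "\<gamma> / 2"] by simp
  finally have cos: "cos (\<phi> - \<psi>) = 2 * (cos (\<gamma> / 2))\<^sup>2 - 1" .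
  have chord: "(cmod (rcis r \<phi> - rcis \<rho> \<psi>))\<^sup>2 = (r + \<rho>)\<^sup>2 - 4 * r * \<rho> * (cos (\<gamma> / 2))\<^sup>2"
    unfolding norm_rcis_diff_sq cos by (simp add: power2_eq_square algebra_simps)
  have mid: "(\<gamma> / 2 + (\<theta> - \<gamma>) / 2) / 2 = \<theta> / 4" by (simp add: field_simps)
  have "sin (\<gamma> / 2) + sin (min ((\<theta> - \<gamma>) / 2) (pi / 2)) \<le> 2 * sin (min (\<theta> / 4) (pi / 2))"
    using sin_le_sin_min_pi_half[of "\<gamma> / 2"]
      sin_min_pi_half_midpoint[of "\<gamma> / 2" "(\<theta> - \<gamma>) / 2", unfolded mid] assms
    by (simp add: \<gamma>_def)
  then have angles: "sin (\<gamma> / 2) + sin (min ((\<theta> - \<gamma>) / 2) (pi / 2)) \<le> 2 * sin (\<theta> / 4)"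
    using \<theta> by (simp add: min_def)
  have "0 \<le> sin (\<gamma> / 2)" using assms by (intro sin_ge_zero) (auto simp: \<gamma>_def)
  moreover have "2 \<le> (2 * sin (\<theta> / 4))\<^sup>2" "0 \<le> 2 * sin (\<theta> / 4)"
    using two_sin_quarter_sq[OF \<theta>] two_sin_quarter_gt_one[OF \<theta>] by auto
  ultimately show ?thesis
    using assms chord angles margin
    by (intro chord_add_margin_le[where S = "sin (\<gamma> / 2)" and C = "cos (\<gamma> / 2)"
          and T = "sin (min ((\<theta> - \<gamma>) / 2) (pi / 2))"]) auto
qed

lemma sector_margin_le_norm_add:
  assumes \<theta>: "pi < \<theta>" "\<theta> < 2 * pi" and "0 < r" "0 < \<rho>" "0 < \<phi>" "\<phi> < \<theta>" "0 < \<psi>" "\<psi> < \<theta>"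
    and "m \<le> infdist (rcis r \<phi>) (sector_rays \<theta>)" "m \<le> infdist (rcis \<rho> \<psi>) (sector_rays \<theta>)"
  shows "cmod (rcis r \<phi> - rcis \<rho> \<psi>) + 2 * m \<le> 2 * sin (\<theta> / 4) * (r + \<rho>)"
proof (cases "\<phi> \<le> \<psi>")
  case True
  then show ?thesis using assms by (intro sector_margin_le_norm_add_ordered) auto
next
  case False
  then have "cmod (rcis \<rho> \<psi> - rcis r \<phi>) + 2 * m \<le> 2 * sin (\<theta> / 4) * (\<rho> + r)"
    using assms by (intro sector_margin_le_norm_add_ordered) auto
  then show ?thesis by (simp add: norm_minus_commute add.commute)
qed

lemma sector_twice_margin_le_across_real_ray:
  assumes \<theta>: "pi < \<theta>" "\<theta> < 2 * pi" and "0 < r" "0 < \<rho>"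
    and "pi < \<phi>" "\<phi> < \<theta>" "0 < \<psi>" "\<psi> < pi" "0 < cos \<phi> + cos \<psi>" "0 \<le> m"
    and "m \<le> infdist (rcis r \<phi>) (sector_rays \<theta>)" "m \<le> infdist (rcis \<rho> \<psi>) (sector_rays \<theta>)"
  shows "2 * m \<le> (2 * sin (\<theta> / 4) - 1) * cmod (rcis r \<phi> - rcis \<rho> \<psi>)"
proof -
  \<comment> \<open>half the angle from \<open>rcis r \<phi>\<close> to \<open>rcis \<rho> \<psi>\<close> measured across the positive real axis\<close>
  define g where "g = (2 * pi - \<phi> + \<psi>) / 2"
  have "cos (pi - \<psi>) < cos (2 * pi - \<phi>)" using assms by (simp add: cos_diff)
  then have "2 * pi - \<phi> < pi - \<psi>" using assms by (subst (asm) cos_mono_less_eq) auto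
  then have g: "0 < g" "g < pi / 2" using assms by (auto simp: g_def)
  have "m * (\<rho> + r) \<le> 2 * \<rho> * r * sin (min ((\<psi> + (\<theta> - \<phi>)) / 2) (pi / 2))"
    using assms infdist_rcis_sector_rays_le[of \<rho> \<psi> \<theta>] infdist_rcis_sector_rays_le_reflect[of r \<phi> \<theta>]
    by (intro margin_le_of_ray_bounds) auto
  also have "(\<psi> + (\<theta> - \<phi>)) / 2 = g + \<theta> / 2 - pi" by (simp add: g_def field_simps)
  also have "min (g + \<theta> / 2 - pi) (pi / 2) = g + \<theta> / 2 - pi" using g \<theta> by simp
  finally have margin: "m * (r + \<rho>) \<le> 2 * r * \<rho> * sin (g + \<theta> / 2 - pi)"
    by (simp add: ac_simps)
  have "2 * g = (\<psi> - \<phi>) + 2 * pi" by (simp add: g_def)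
  then have "cos (\<phi> - \<psi>) = cos (2 * g)" by (metis cos_minus cos_periodic minus_diff_eq)
  also have "\<dots> = 1 - 2 * (sin g)\<^sup>2" by (rule cos_double_sin)
  finally have cos: "cos (\<phi> - \<psi>) = 1 - 2 * (sin g)\<^sup>2" .
  have "(cmod (rcis r \<phi> - rcis \<rho> \<psi>))\<^sup>2 = (r - \<rho>)\<^sup>2 + 4 * r * \<rho> * (sin g)\<^sup>2"
    unfolding norm_rcis_diff_sq cos by (simp add: power2_eq_square algebra_simps)
  then have chord: "4 * r * \<rho> * (sin g)\<^sup>2 \<le> (cmod (rcis r \<phi> - rcis \<rho> \<psi>))\<^sup>2" by simp
  have "0 \<le> sin g" using g by (intro sin_ge_zero) auto
  then show ?thesis
    using assms margin chord sin_add_half_sub_pi_le[OF \<theta>, of g] g two_sin_quarter_gt_one[OF \<theta>]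
    by (intro twice_margin_le[where S = "sin g" and T = "sin (g + \<theta> / 2 - pi)"]) auto
qed

lemma sector_twice_margin_le_opposite_sides:
  assumes \<theta>: "pi < \<theta>" "\<theta> < 2 * pi" and "0 < r" "0 < \<rho>"
    and "0 < \<phi>" "\<phi> < \<theta>" "0 < \<psi>" "\<psi> < \<theta>"
    and "Im (rcis r \<phi>) * Im (rcis \<rho> \<psi>) < 0" "0 < cos \<phi> + cos \<psi>" "0 \<le> m"
    and "m \<le> infdist (rcis r \<phi>) (sector_rays \<theta>)" "m \<le> infdist (rcis \<rho> \<psi>) (sector_rays \<theta>)"
  shows "2 * m \<le> (2 * sin (\<theta> / 4) - 1) * cmod (rcis r \<phi> - rcis \<rho> \<psi>)"
proof -
  have lower: "pi < a" if "sin a < 0" "0 < a" for a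
    using that sin_ge_zero[of a] by (cases "a \<le> pi") auto
  have upper: "a < pi" if "0 < sin a" "0 < a" "a < \<theta>" for a
    using that sin_gt_zero_iff[of a] \<theta> by auto
  have "r * \<rho> * (sin \<phi> * sin \<psi>) < 0" using assms by (simp add: ac_simps)
  then have "sin \<phi> * sin \<psi> < 0" using assms by (simp add: mult_less_0_iff)
  then consider "sin \<phi> < 0" "0 < sin \<psi>" | "0 < sin \<phi>" "sin \<psi> < 0" by (auto simp: mult_less_0_iff)
  then show ?thesis
  proof cases
    case 1
    then show ?thesis using assms lower upper by (intro sector_twice_margin_le_across_real_ray) auto
  next
    case 2
    then have "2 * m \<le> (2 * sin (\<theta> / 4) - 1) * cmod (rcis \<rho> \<psi> - rcis r \<phi>)"
      using assms lower upper
      by (intro sector_twice_margin_le_across_real_ray) (auto simp: add.commute)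
    then show ?thesis by (simp add: norm_minus_commute)
  qed
qed

lemma cross_term_le_of_cos_add_pos:
  assumes "0 < r" "0 < \<rho>" "0 \<le> cos \<phi>" "0 < cos \<phi> + cos \<psi>"
  shows "max 0 (- Re (rcis \<rho> \<psi>)) * \<bar>Im (rcis r \<phi>)\<bar> \<le> Re (rcis r \<phi>) * \<bar>Im (rcis \<rho> \<psi>)\<bar>"
proof (cases "0 \<le> cos \<psi>")
  case True
  then show ?thesis using assms by simp
next
  case False
  have "\<bar>cos \<psi>\<bar> \<le> \<bar>cos \<phi>\<bar>" using False assms by simp
  then have "\<bar>sin \<phi>\<bar> \<le> \<bar>sin \<psi>\<bar>" by (simp add: abs_le_square_iff sin_squared_eq)
  then have "- cos \<psi> * \<bar>sin \<phi>\<bar> \<le> cos \<phi> * \<bar>sin \<psi>\<bar>" using False assms by (intro mult_mono) auto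
  then have "\<rho> * r * (- cos \<psi> * \<bar>sin \<phi>\<bar>) \<le> \<rho> * r * (cos \<phi> * \<bar>sin \<psi>\<bar>)"
    using assms by (intro mult_left_mono) auto
  then show ?thesis using False assms by (simp add: abs_mult max_def mult_le_0_iff algebra_simps)
qed

lemma sector_margin_le_norm_conj:
  assumes \<theta>: "pi < \<theta>" "\<theta> < 2 * pi" and "0 < r" "0 < \<rho>"
    and "0 \<le> Im (rcis r \<phi>) * Im (rcis \<rho> \<psi>)" "0 < cos \<phi> + cos \<psi>" "0 \<le> m"
    and "m \<le> infdist (rcis r \<phi>) (sector_rays \<theta>)" "m \<le> infdist (rcis \<rho> \<psi>) (sector_rays \<theta>)"
  shows "cmod (rcis r \<phi> - rcis \<rho> \<psi>) + 2 * m \<le> 2 * sin (\<theta> / 4) * cmod (rcis r \<phi> - cnj (rcis \<rho> \<psi>))"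
proof -
  have right_half: "cmod (x - y) + 2 * m \<le> 2 * sin (\<theta> / 4) * cmod (x - cnj y)"
    if "0 \<le> Im x * Im y" "0 \<le> Re x" "max 0 (- Re y) * \<bar>Im x\<bar> \<le> Re x * \<bar>Im y\<bar>"
      and "m \<le> infdist x (sector_rays \<theta>)" "m \<le> infdist y (sector_rays \<theta>)" for x y
  proof -
    have "m \<le> \<bar>Im x\<bar>" using that infdist_sector_rays_le[of x \<theta>] by simp
    moreover have "m \<le> \<bar>Im y\<bar> + max 0 (- Re y) * cmod (1 + cis \<theta>)"
      using that infdist_sector_rays_le[of y \<theta>] by simp
    ultimately show ?thesis
      using that assms two_sin_quarter_sq[OF \<theta>] two_sin_quarter_gt_one[OF \<theta>]
      by (intro norm_diff_add_margin_le_conj[where c = "cmod (1 + cis \<theta>)"]) auto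
  qed
  show ?thesis
  proof (cases "0 \<le> cos \<phi>")
    case True
    then show ?thesis
      using assms cross_term_le_of_cos_add_pos[of r \<rho> \<phi> \<psi>] by (intro right_half) auto
  next
    case False
    then have "0 \<le> cos \<psi>" using assms by simp
    then have "cmod (rcis \<rho> \<psi> - rcis r \<phi>) + 2 * m \<le>
               2 * sin (\<theta> / 4) * cmod (rcis \<rho> \<psi> - cnj (rcis r \<phi>))"
      using assms cross_term_le_of_cos_add_pos[of \<rho> r \<psi> \<phi>]
      by (intro right_half) (auto simp: mult.commute add.commute)
    moreover have "cmod (rcis \<rho> \<psi> - cnj (rcis r \<phi>)) = cmod (rcis r \<phi> - cnj (rcis \<rho> \<psi>))"
      by (metis complex_cnj_cnj complex_cnj_diff complex_mod_cnj norm_minus_commute)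
    ultimately show ?thesis by (simp add: norm_minus_commute)
  qed
qed

lemma sector_margin_le_real_ray:
  assumes \<theta>: "pi < \<theta>" "\<theta> < 2 * pi" and "0 < r" "0 < \<rho>"
    and "0 < \<phi>" "\<phi> < \<theta>" "0 < \<psi>" "\<psi> < \<theta>" "0 \<le> t" "0 \<le> m"
    and "m \<le> infdist (rcis r \<phi>) (sector_rays \<theta>)" "m \<le> infdist (rcis \<rho> \<psi>) (sector_rays \<theta>)"
  shows "cmod (rcis r \<phi> - rcis \<rho> \<psi>) + 2 * m \<le>
         2 * sin (\<theta> / 4) * (cmod (rcis r \<phi> - of_real t) + cmod (of_real t - rcis \<rho> \<psi>))"
    (is "?d + 2 * m \<le> ?k * ?D")
proof -
  have k: "1 < ?k" using two_sin_quarter_gt_one[OF \<theta>] .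
  consider "cos \<phi> + cos \<psi> \<le> 0"
    | "0 < cos \<phi> + cos \<psi>" "0 \<le> Im (rcis r \<phi>) * Im (rcis \<rho> \<psi>)"
    | "0 < cos \<phi> + cos \<psi>" "Im (rcis r \<phi>) * Im (rcis \<rho> \<psi>) < 0"
    by linarith
  then show ?thesis
  proof cases
    case 1
    then have "?k * (r + \<rho>) \<le> ?k * ?D"
      using k assms radii_sum_le_dist_sum by (intro mult_left_mono) auto
    moreover have "?d + 2 * m \<le> ?k * (r + \<rho>)" using assms by (intro sector_margin_le_norm_add) auto
    ultimately show ?thesis by linarith
  next
    case 2
    have "?k * cmod (rcis r \<phi> - cnj (rcis \<rho> \<psi>)) \<le> ?k * ?D"
      using k norm_diff_cnj_le_dist_sum by (intro mult_left_mono) auto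
    moreover have "?d + 2 * m \<le> ?k * cmod (rcis r \<phi> - cnj (rcis \<rho> \<psi>))"
      using 2 assms by (intro sector_margin_le_norm_conj) auto
    ultimately show ?thesis by linarith
  next
    case 3
    then have "2 * m \<le> (?k - 1) * ?d"
      using assms by (intro sector_twice_margin_le_opposite_sides) auto
    then have "?d + 2 * m \<le> ?k * ?d" by (simp add: algebra_simps)
    also have "\<dots> \<le> ?k * ?D"
      using k norm_triangle_ineq[of "rcis r \<phi> - of_real t" "of_real t - rcis \<rho> \<psi>"]
      by (intro mult_left_mono) auto
    finally show ?thesis .
  qed
qed

lemma sector_margin_le:
  assumes \<theta>: "pi < \<theta>" "\<theta> < 2 * pi"
    and "x \<in> sector \<theta>" "y \<in> sector \<theta>" "z \<in> sector_rays \<theta>"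
  shows "cmod (x - y) + 2 * min (infdist x (sector_rays \<theta>)) (infdist y (sector_rays \<theta>))
         \<le> 2 * sin (\<theta> / 4) * (cmod (x - z) + cmod (z - y))"
proof -
  define m where "m = min (infdist x (sector_rays \<theta>)) (infdist y (sector_rays \<theta>))"
  have m: "0 \<le> m" "m \<le> infdist x (sector_rays \<theta>)" "m \<le> infdist y (sector_rays \<theta>)"
    by (auto simp: m_def infdist_nonneg)
  obtain r \<phi> \<rho> \<psi> where x: "0 < r" "0 < \<phi>" "\<phi> < \<theta>" "x = rcis r \<phi>"
    and y: "0 < \<rho>" "0 < \<psi>" "\<psi> < \<theta>" "y = rcis \<rho> \<psi>"
    using assms mem_sector_iff_rcis[of \<theta>] by (metis less_imp_le)
  obtain t where t: "0 \<le> t" "z = of_real t \<or> z = sector_reflect \<theta> (of_real t)"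
    using assms(5) by (auto simp: sector_rays_def)
  have mx: "m \<le> infdist (rcis r \<phi>) (sector_rays \<theta>)" and my: "m \<le> infdist (rcis \<rho> \<psi>) (sector_rays \<theta>)"
    using m x(4) y(4) by simp_all
  show ?thesis
  proof (cases "z = of_real t")
    case True
    then show ?thesis
      using sector_margin_le_real_ray[OF \<theta> x(1) y(1) x(2,3) y(2,3) t(1) m(1) mx my] x(4) y(4)
      by (simp add: m_def)
  next
    case False
    then have z: "sector_reflect \<theta> z = of_real t" using t by auto
    have "cmod (rcis r (\<theta> - \<phi>) - rcis \<rho> (\<theta> - \<psi>)) + 2 * m \<le>
          2 * sin (\<theta> / 4) * (cmod (rcis r (\<theta> - \<phi>) - of_real t) + cmod (of_real t - rcis \<rho> (\<theta> - \<psi>)))"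
      using m x y t(1) infdist_sector_reflect[of \<theta> x] infdist_sector_reflect[of \<theta> y]
      by (intro sector_margin_le_real_ray[OF \<theta>]) auto
    then show ?thesis
      using norm_sector_reflect_diff[of \<theta> x y] norm_sector_reflect_diff[of \<theta> x z]
        norm_sector_reflect_diff[of \<theta> z y]
      by (simp add: x(4) y(4) z m_def)
  qed
qed

section \<open>The triangular ratio metric and the \<open>j*\<close>-metric\<close>

lemma bdist_eq_infdist: "frontier G \<noteq> {} \<Longrightarrow> bdist G x = infdist x (frontier G)"
  by (simp add: bdist_def infdist_notempty dist_norm)

lemma bdist_sector:
  assumes "pi < \<theta>" "\<theta> < 2 * pi"
  shows "bdist (sector \<theta>) z = infdist z (sector_rays \<theta>)"
  using bdist_eq_infdist[of "sector \<theta>" z] frontier_sector[OF assms] by auto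

lemma jstar_metric_nonneg: "frontier G \<noteq> {} \<Longrightarrow> 0 \<le> jstar_metric G x y"
  by (simp add: jstar_metric_def bdist_eq_infdist infdist_nonneg)

lemma s_metric_le_jstar_metric:
  assumes "frontier G \<noteq> {}" "0 < k"
    and margin: "\<And>z. z \<in> frontier G \<Longrightarrow>
      cmod (x - y) + 2 * min (bdist G x) (bdist G y) \<le> k * (cmod (x - z) + cmod (z - y))"
  shows "s_metric G x y \<le> k * jstar_metric G x y"
proof (cases "x = y")
  case True
  then show ?thesis by (simp add: s_metric_def jstar_metric_def)
next
  case False
  define d m I where "d = cmod (x - y)" and "m = min (bdist G x) (bdist G y)"
    and "I = Inf ((\<lambda>z. cmod (x - z) + cmod (z - y)) ` frontier G)"
  have d: "0 < d" using False by (simp add: d_def)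
  have m: "0 \<le> m" using assms(1) by (simp add: m_def bdist_eq_infdist infdist_nonneg)
  have "(d + 2 * m) / k \<le> I"
    unfolding I_def using assms
    by (intro cInf_greatest) (auto simp: d_def m_def pos_divide_le_eq mult.commute)
  moreover have "0 < (d + 2 * m) / k" using d m assms by simp
  ultimately have "0 < I * ((d + 2 * m) / k)" by (intro mult_pos_pos) linarith+
  then have "d / I \<le> d / ((d + 2 * m) / k)"
    using \<open>(d + 2 * m) / k \<le> I\<close> d by (intro divide_left_mono) auto
  then show ?thesis by (simp add: s_metric_def jstar_metric_def d_def m_def I_def ac_simps)
qed

lemma s_metric_ge:
  assumes "z \<in> frontier G" "x \<noteq> y"
  shows "cmod (x - y) / (cmod (x - z) + cmod (z - y)) \<le> s_metric G x y"
proof -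
  define I where "I = Inf ((\<lambda>z. cmod (x - z) + cmod (z - y)) ` frontier G)"
  have "I \<le> cmod (x - z) + cmod (z - y)"
    unfolding I_def using assms by (intro cInf_lower bdd_belowI[of _ 0]) auto
  moreover have "cmod (x - y) \<le> I"
    unfolding I_def using assms norm_triangle_ineq[of "x - w" "w - y" for w]
    by (intro cInf_greatest) auto
  moreover have "0 < cmod (x - y)" using assms by simp
  ultimately have "cmod (x - y) / (cmod (x - z) + cmod (z - y)) \<le> cmod (x - y) / I"
    by (intro divide_left_mono mult_pos_pos) linarith+
  then show ?thesis by (simp add: s_metric_def I_def)
qed

lemma jstar_metric_le:
  assumes "0 \<le> b" "b \<le> bdist G x" "b \<le> bdist G y"
  shows "jstar_metric G x y \<le> cmod (x - y) / (cmod (x - y) + 2 * b)"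
proof (cases "x = y")
  case False
  have "b \<le> min (bdist G x) (bdist G y)" "0 < cmod (x - y)" using assms False by simp_all
  then show ?thesis
    unfolding jstar_metric_def using assms by (intro divide_left_mono mult_pos_pos) linarith+
qed (simp add: jstar_metric_def)

lemma sector_s_metric_le_jstar_metric:
  assumes \<theta>: "pi < \<theta>" "\<theta> < 2 * pi" and "x \<in> sector \<theta>" "y \<in> sector \<theta>"
  shows "s_metric (sector \<theta>) x y \<le> 2 * sin (\<theta> / 4) * jstar_metric (sector \<theta>) x y"
proof (rule s_metric_le_jstar_metric)
  have frontier: "frontier (sector \<theta>) = sector_rays \<theta>" by (rule frontier_sector[OF \<theta>])
  then show "frontier (sector \<theta>) \<noteq> {}" by auto
  show "0 < 2 * sin (\<theta> / 4)" using two_sin_quarter_gt_one[OF \<theta>] by simp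
  show "cmod (x - y) + 2 * min (bdist (sector \<theta>) x) (bdist (sector \<theta>) y)
        \<le> 2 * sin (\<theta> / 4) * (cmod (x - z) + cmod (z - y))" if "z \<in> frontier (sector \<theta>)" for z
    using sector_margin_le[OF \<theta> assms(3,4)] that by (simp add: frontier bdist_sector[OF \<theta>])
qed

lemma infdist_cis_quarter_ge:
  assumes "pi < \<theta>" "\<theta> < 2 * pi"
  shows "sin (\<theta> / 4) \<le> infdist (cis (\<theta> / 4)) (sector_rays \<theta>)"
proof (rule le_infdist)
  show "sector_rays \<theta> \<noteq> {}" by auto
  fix w assume "w \<in> sector_rays \<theta>"
  then obtain t where t: "0 \<le> t" "w = of_real t \<or> w = rcis t \<theta>"
    by (auto simp: sector_rays_def)
  show "sin (\<theta> / 4) \<le> dist (cis (\<theta> / 4)) w"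
  proof (cases "w = of_real t")
    case True
    then show ?thesis
      using abs_Im_le_cmod[of "cis (\<theta> / 4) - w"] sin_quarter_pos[of \<theta>] assms
      by (simp add: dist_norm)
  next
    case False
    have "\<theta> - \<theta> / 4 = 3 * \<theta> / 4" by simp
    then have "dist (cis (\<theta> / 4)) w = cmod (rcis 1 (3 * \<theta> / 4) - of_real t)"
      using False t norm_sector_reflect_diff[of \<theta> "cis (\<theta> / 4)" w]
      by (simp add: dist_norm cis_rcis_eq)
    moreover have "1 - t * cos (3 * \<theta> / 4) \<le> cmod (rcis 1 (3 * \<theta> / 4) - of_real t)"
      by (rule norm_rcis_minus_of_real_ge)
    moreover have "cos (3 * \<theta> / 4) \<le> 0"
      using cos_ge_zero[of "3 * \<theta> / 4 - pi"] assms by (simp add: cos_diff)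
    then have "t * cos (3 * \<theta> / 4) \<le> 0" using t(1) by (simp add: mult_nonneg_nonpos)
    ultimately show ?thesis using sin_le_one[of "\<theta> / 4"] by linarith
  qed
qed

lemma sector_extremal_pair:
  assumes \<theta>: "pi < \<theta>" "\<theta> < 2 * pi"
  shows "cis (\<theta> / 4) \<in> sector \<theta>" "cis (3 * \<theta> / 4) \<in> sector \<theta>"
    and "sin (\<theta> / 4) \<le> s_metric (sector \<theta>) (cis (\<theta> / 4)) (cis (3 * \<theta> / 4))"
    and "jstar_metric (sector \<theta>) (cis (\<theta> / 4)) (cis (3 * \<theta> / 4)) \<le> 1 / 2"
proof -
  let ?x = "cis (\<theta> / 4)" and ?y = "cis (3 * \<theta> / 4)"
  have s: "0 < sin (\<theta> / 4)" using sin_quarter_pos[of \<theta>] \<theta> by simp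
  have le: "\<theta> \<le> 2 * pi" using \<theta> by simp
  show "?x \<in> sector \<theta>" "?y \<in> sector \<theta>"
    unfolding cis_rcis_eq mem_sector_iff_rcis[OF le] using \<theta>
    by (intro exI[of _ 1] exI[of _ "\<theta> / 4"] exI[of _ "3 * \<theta> / 4"]; simp)+
  have "(cmod (?x - ?y))\<^sup>2 = (2 * sin (\<theta> / 4))\<^sup>2"
    using norm_rcis_diff_sq[of 1 "\<theta> / 4" 1 "3 * \<theta> / 4"] two_sin_half_sq[of "\<theta> / 2"]
      cos_minus[of "\<theta> / 2"]
    by (simp add: cis_rcis_eq)
  then have d: "cmod (?x - ?y) = 2 * sin (\<theta> / 4)"
    by (rule power2_eq_imp_eq) (use s in auto)
  have "\<theta> - \<theta> / 4 = 3 * \<theta> / 4" by simp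
  then have "infdist ?y (sector_rays \<theta>) = infdist ?x (sector_rays \<theta>)"
    using infdist_sector_reflect[of \<theta> ?x] by (simp add: cis_rcis_eq)
  then have "sin (\<theta> / 4) \<le> bdist (sector \<theta>) ?x" "sin (\<theta> / 4) \<le> bdist (sector \<theta>) ?y"
    using infdist_cis_quarter_ge[OF \<theta>] by (simp_all add: bdist_sector[OF \<theta>])
  then show "jstar_metric (sector \<theta>) ?x ?y \<le> 1 / 2"
    using jstar_metric_le[of "sin (\<theta> / 4)" "sector \<theta>" ?x ?y] s d by simp
  have "?x \<noteq> ?y" using d s by auto
  then show "sin (\<theta> / 4) \<le> s_metric (sector \<theta>) ?x ?y"
    using s_metric_ge[of 0 "sector \<theta>" ?x ?y] frontier_sector[OF \<theta>] d by simp
qed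

lemma sector_constant_sharp:
  assumes \<theta>: "pi < \<theta>" "\<theta> < 2 * pi" and c: "c < 2 * sin (\<theta> / 4)"
  shows "\<exists>x\<in>sector \<theta>. \<exists>y\<in>sector \<theta>. c * jstar_metric (sector \<theta>) x y < s_metric (sector \<theta>) x y"
proof -
  let ?x = "cis (\<theta> / 4)" and ?y = "cis (3 * \<theta> / 4)"
  note pair = sector_extremal_pair[OF \<theta>]
  have j: "0 \<le> jstar_metric (sector \<theta>) ?x ?y"
    using frontier_sector[OF \<theta>] by (intro jstar_metric_nonneg) auto
  have "c * jstar_metric (sector \<theta>) ?x ?y < sin (\<theta> / 4)"
  proof (cases "c \<le> 0")
    case True
    then show ?thesis using mult_nonpos_nonneg[OF True j] sin_quarter_pos[of \<theta>] \<theta> by linarith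
  next
    case False
    then have "c * jstar_metric (sector \<theta>) ?x ?y \<le> c * (1 / 2)"
      using pair(4) by (intro mult_left_mono) auto
    then show ?thesis using c by linarith
  qed
  then have "c * jstar_metric (sector \<theta>) ?x ?y < s_metric (sector \<theta>) ?x ?y"
    using pair(3) by linarith
  then show ?thesis using pair(1,2) by blast
qed

theorem theorem3p4:
  fixes \<theta> :: real
  assumes "pi < \<theta>" and "\<theta> < 2 * pi"
  shows "(\<forall>x\<in>sector \<theta>. \<forall>y\<in>sector \<theta>.
            s_metric (sector \<theta>) x y \<le> 2 * sin (\<theta> / 4) * jstar_metric (sector \<theta>) x y)
       \<and> (\<forall>c < 2 * sin (\<theta> / 4). \<exists>x\<in>sector \<theta>. \<exists>y\<in>sector \<theta>.
            c * jstar_metric (sector \<theta>) x y < s_metric (sector \<theta>) x y)"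
  using sector_s_metric_le_jstar_metric[OF assms] sector_constant_sharp[OF assms] by blast

end
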